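(* For positive integers $m$ and $n$, \begin{align*} \overline{{m+n \brack n}}_{q,t} &= \overline{{m+n -1\brack n-1}}_{q,t} +q^n \overline{{m+n-1 \brack n}}_{q,t} + tq^n \overline{ {m+n-2 \brack n-1}}_{q,t},\\ \overline{{m+n \brack n}}_{q,t} &= \overline{{m+n -1\brack n}}_{q,t} +q^m \overline{{m+n-1 \brack n-1}}_{q,t} + tq^m \overline{{m+n-2 \brack n-1}}_{q,t}. \end{align*}
   Context: An overpartition is a partition in which the last occurrence of each distinct part size may be overlined; its weight $|\lambda|$ is the sum of its parts. For integers $0\le b\le a$, $\overline{{a \brack b}}_{q,t}=\sum_{\lambda} t^{\#_o(\lambda)} q^{|\lambda|}$, the sum over all overpartitions $\lambda$ with largest part at most $a-b$ and at most $b$ parts, $\#_o(\lambda)$ being the number of overlined parts. *)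

theory Defs
  imports Main "HOL-Library.Multiset"
begin

text \<open>An overpartition is represented as a pair (M, S): M is the multiset of
(positive) parts, S is the set of part sizes whose last occurrence is overlined
(so S is a subset of the distinct parts).\<close>

definition overpartitions_box :: "nat \<Rightarrow> nat \<Rightarrow> (nat multiset \<times> nat set) set" where
  "overpartitions_box k b =
     {(M, S). (\<forall>x \<in># M. 0 < x \<and> x \<le> k) \<and> size M \<le> b \<and> S \<subseteq> set_mset M}"

text \<open>Overpartition analogue of the Gaussian binomial, evaluated at q, t in an
arbitrary commutative ring: sum over overpartitions with largest part at most a - b
and at most b parts.\<close>

definition over_gauss :: "nat \<Rightarrow> nat \<Rightarrow> 'a::comm_ring_1 \<Rightarrow> 'a \<Rightarrow> 'a" where
  "over_gauss a b q t =
     (\<Sum>(M, S) \<in> overpartitions_box (a - b) b. t ^ card S * q ^ sum_mset M)"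

end

theory Submission
  imports Defs
begin

text \<open>Both identities come from splitting the overpartitions in a box (parts at most \<open>k\<close>, at
most \<open>b\<close> parts) into three classes, each in weight-preserving bijection with a smaller box.
For the second identity look at the part \<open>k\<close>: either it does not occur; or one copy of it
can be deleted leaving an overpartition (weight factor \<open>q\<^sup>k\<close>); or it occurs exactly once and
is overlined (factor \<open>t q\<^sup>k\<close>). For the first identity look at the number of parts: fewer
than \<open>b\<close>; or exactly \<open>b\<close>, and then deleting the first column of the Ferrers diagram costs
\<open>q\<^sup>b\<close>, and when the part \<open>1\<close> was overlined also a factor \<open>t\<close> and at least one part.
Overlines survive these operations because the remaining parts keep their relative order.\<close>

type_synonym overpartition = "nat multiset \<times> nat set"

lemma sum_image_eq_mult:
  fixes f :: "'a \<Rightarrow> 'b::semiring_0"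
  assumes "inj_on g A" and "\<And>x. x \<in> A \<Longrightarrow> f (g x) = c * f x"
  shows "sum f (g ` A) = c * sum f A"
  using assms by (simp add: sum.reindex sum_distrib_left)

lemma sum_Un3:
  assumes "finite A" "finite B" "finite C" "A \<inter> B = {}" "A \<inter> C = {}" "B \<inter> C = {}"
  shows "sum f (A \<union> B \<union> C) = sum f A + sum f B + sum f C"
  using assms by (simp add: sum.union_disjoint Int_Un_distrib2)

lemma overpartitions_box_iff:
  "(M, S) \<in> overpartitions_box k b \<longleftrightarrow>
     (\<forall>x\<in>#M. 0 < x \<and> x \<le> k) \<and> size M \<le> b \<and> S \<subseteq> set_mset M"
  by (simp add: overpartitions_box_def)

lemma finite_overpartitions_box: "finite (overpartitions_box k b)"
proof (rule finite_subset)
  show "overpartitions_box k b \<subseteq> (\<Union>n\<le>b. multisets_of_size {..k} n) \<times> Pow {..k}"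
    by (force simp: overpartitions_box_def multisets_of_size_def)
qed auto

lemma overpartitions_box_mono:
  "k \<le> k' \<Longrightarrow> b \<le> b' \<Longrightarrow> overpartitions_box k b \<subseteq> overpartitions_box k' b'"
  by (force simp: overpartitions_box_def)

lemma not_in_overpartitions_box:
  assumes "(M, S) \<in> overpartitions_box k b" and "k < x"
  shows "x \<notin># M" and "x \<notin> S"
  using assms by (fastforce simp: overpartitions_box_iff)+

definition overpartition_weight :: "'a::comm_ring_1 \<Rightarrow> 'a \<Rightarrow> overpartition \<Rightarrow> 'a" where
  "overpartition_weight q t = (\<lambda>(M, S). t ^ card S * q ^ sum_mset M)"

definition over_gauss_box :: "nat \<Rightarrow> nat \<Rightarrow> 'a::comm_ring_1 \<Rightarrow> 'a \<Rightarrow> 'a" where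
  "over_gauss_box k b q t = sum (overpartition_weight q t) (overpartitions_box k b)"

lemma over_gauss_eq_over_gauss_box: "over_gauss a b q t = over_gauss_box (a - b) b q t"
  by (simp add: over_gauss_def over_gauss_box_def overpartition_weight_def)

definition add_part :: "nat \<Rightarrow> overpartition \<Rightarrow> overpartition" where
  "add_part k = (\<lambda>(M, S). (add_mset k M, S))"

definition add_overlined_part :: "nat \<Rightarrow> overpartition \<Rightarrow> overpartition" where
  "add_overlined_part k = (\<lambda>(M, S). (add_mset k M, insert k S))"

lemma overpartitions_box_Suc_iff:
  assumes "Suc k \<notin># M"
  shows "(M, S) \<in> overpartitions_box (Suc k) b \<longleftrightarrow> (M, S) \<in> overpartitions_box k b"
proof -
  have "x \<le> Suc k \<longleftrightarrow> x \<le> k" if "x \<in># M" for x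
    using that assms by (cases "x = Suc k") auto
  then show ?thesis by (auto simp: overpartitions_box_iff)
qed

lemma overpartitions_box_split_largest_part:
  "overpartitions_box (Suc k) (Suc b) = overpartitions_box k (Suc b)
     \<union> add_part (Suc k) ` overpartitions_box (Suc k) b
     \<union> add_overlined_part (Suc k) ` overpartitions_box k b"
  (is "?B = ?P0 \<union> ?PA \<union> ?PB")
proof
  have "?P0 \<subseteq> ?B" by (rule overpartitions_box_mono) auto
  moreover have "add_part (Suc k) p \<in> ?B" if "p \<in> overpartitions_box (Suc k) b" for p
    using that by (cases p) (auto simp: add_part_def overpartitions_box_iff)
  moreover have "add_overlined_part (Suc k) p \<in> ?B" if "p \<in> overpartitions_box k b" for p
    using that by (cases p) (auto simp: add_overlined_part_def overpartitions_box_iff)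
  ultimately show "?P0 \<union> ?PA \<union> ?PB \<subseteq> ?B" by blast
next
  show "?B \<subseteq> ?P0 \<union> ?PA \<union> ?PB"
  proof
    fix p assume "p \<in> ?B"
    then obtain M S where p: "p = (M, S)" and box: "(M, S) \<in> ?B" by (cases p) auto
    show "p \<in> ?P0 \<union> ?PA \<union> ?PB"
    proof (cases "Suc k \<in># M")
      case False
      then show ?thesis using box by (simp add: p overpartitions_box_Suc_iff)
    next
      case True
      then obtain N where M: "M = add_mset (Suc k) N"
        by (blast dest: multi_member_split)
      show ?thesis
      proof (cases "S \<subseteq> set_mset N")
        case True
        then have "(N, S) \<in> overpartitions_box (Suc k) b"
          using box by (auto simp: M overpartitions_box_iff)
        moreover have "p = add_part (Suc k) (N, S)"
          by (simp add: p M add_part_def)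
        ultimately show ?thesis by blast
      next
        case False
        then have "Suc k \<in> S" "Suc k \<notin># N"
          using box by (auto simp: M overpartitions_box_iff)
        have "(N, S - {Suc k}) \<in> overpartitions_box (Suc k) b"
          using box by (auto simp: M overpartitions_box_iff)
        then have "(N, S - {Suc k}) \<in> overpartitions_box k b"
          using overpartitions_box_Suc_iff[OF \<open>Suc k \<notin># N\<close>] by blast
        moreover have "p = add_overlined_part (Suc k) (N, S - {Suc k})"
          using \<open>Suc k \<in> S\<close> by (simp add: p M add_overlined_part_def insert_absorb)
        ultimately show ?thesis by blast
      qed
    qed
  qed
qed

lemma over_gauss_box_largest_part:
  "over_gauss_box (Suc k) (Suc b) q t = over_gauss_box k (Suc b) q t
     + q ^ Suc k * over_gauss_box (Suc k) b q t + t * q ^ Suc k * over_gauss_box k b q t"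
proof -
  let ?w = "overpartition_weight q t"
  let ?P0 = "overpartitions_box k (Suc b)"
  let ?A = "overpartitions_box (Suc k) b" and ?C = "overpartitions_box k b"
  have k_notin: "Suc k \<notin># M" "Suc k \<notin> S" if "(M, S) \<in> overpartitions_box k b'" for M S b'
    using not_in_overpartitions_box[OF that] by auto
  have "sum ?w (add_part (Suc k) ` ?A) = q ^ Suc k * sum ?w ?A"
  proof (rule sum_image_eq_mult)
    show "inj_on (add_part (Suc k)) ?A"
      by (rule inj_onI) (auto simp: add_part_def split: prod.splits)
    show "?w (add_part (Suc k) p) = q ^ Suc k * ?w p" for p
      by (cases p) (simp add: add_part_def overpartition_weight_def power_add mult_ac)
  qed
  moreover have "sum ?w (add_overlined_part (Suc k) ` ?C) = t * q ^ Suc k * sum ?w ?C"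
  proof (rule sum_image_eq_mult)
    show "inj_on (add_overlined_part (Suc k)) ?C"
      by (rule inj_onI) (auto simp: add_overlined_part_def insert_ident not_in_overpartitions_box)
    show "?w (add_overlined_part (Suc k) p) = t * q ^ Suc k * ?w p" if "p \<in> ?C" for p
    proof (cases p)
      case (Pair M S)
      with that have C: "(M, S) \<in> ?C" by simp
      then have "finite S"
        by (auto simp: overpartitions_box_iff intro: finite_subset)
      moreover have "Suc k \<notin> S" using C by (rule k_notin)
      ultimately show ?thesis
        by (simp add: Pair add_overlined_part_def overpartition_weight_def power_add mult_ac)
    qed
  qed
  moreover have "?P0 \<inter> add_part (Suc k) ` ?A = {}" "?P0 \<inter> add_overlined_part (Suc k) ` ?C = {}"
    by (auto simp: add_part_def add_overlined_part_def dest: k_notin)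
  moreover have "add_part (Suc k) ` ?A \<inter> add_overlined_part (Suc k) ` ?C = {}"
    by (auto simp: add_part_def add_overlined_part_def overpartitions_box_iff dest: k_notin)
  ultimately show ?thesis
    unfolding over_gauss_box_def overpartitions_box_split_largest_part
    by (simp add: sum_Un3 finite_overpartitions_box)
qed

text \<open>\<open>add_column b M\<close> adds a column of height \<open>b\<close> to the Ferrers diagram of \<open>M\<close>,
after padding \<open>M\<close> with parts \<open>0\<close> up to \<open>b\<close> parts.\<close>

definition add_column :: "nat \<Rightarrow> nat multiset \<Rightarrow> nat multiset" where
  "add_column b M = image_mset Suc M + replicate_mset (b - size M) 1"

definition remove_column :: "nat multiset \<Rightarrow> nat multiset" where
  "remove_column M = image_mset (\<lambda>x. x - 1) (filter_mset (\<lambda>x. 1 < x) M)"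

lemma size_add_column: "size M \<le> b \<Longrightarrow> size (add_column b M) = b"
  by (simp add: add_column_def)

lemma sum_mset_add_column:
  assumes "size M \<le> b"
  shows "sum_mset (add_column b M) = sum_mset M + b"
proof -
  have "sum_mset (image_mset Suc M) = sum_mset M + size M"
    by (induction M) auto
  then show ?thesis using assms by (simp add: add_column_def)
qed

lemma set_mset_add_column_subset: "set_mset (add_column b M) \<subseteq> insert 1 (Suc ` set_mset M)"
  by (auto simp: add_column_def)

lemma Suc_in_add_column: "x \<in># M \<Longrightarrow> Suc x \<in># add_column b M"
  by (simp add: add_column_def)

lemma one_in_add_column: "size M < b \<Longrightarrow> 1 \<in># add_column b M"
  by (simp add: add_column_def)

lemma in_remove_column_iff: "x \<in># remove_column M \<longleftrightarrow> 0 < x \<and> Suc x \<in># M"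
  by (force simp: remove_column_def)

lemma remove_add_column:
  assumes "\<forall>x\<in>#M. 0 < x"
  shows "remove_column (add_column b M) = M"
proof -
  have "filter_mset (\<lambda>x. 1 < x) (add_column b M) = image_mset Suc (filter_mset (\<lambda>x. 0 < x) M)"
    by (simp add: add_column_def filter_mset_image_mset comp_def)
  also have "filter_mset (\<lambda>x. 0 < x) M = M"
    using assms by (metis filter_mset_True filter_mset_cong0)
  finally show ?thesis by (simp add: remove_column_def multiset.map_comp comp_def)
qed

lemma
  assumes "\<forall>x\<in>#M. 0 < x"
  shows size_remove_column: "size (remove_column M) + count M 1 = size M"
    and add_remove_column: "add_column (size M) (remove_column M) = M"
proof -
  have "filter_mset (\<lambda>x. \<not> 1 < x) M = filter_mset (\<lambda>x. x = 1) M"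
    using assms by (intro filter_mset_cong0) auto
  then have parts: "M = filter_mset (\<lambda>x. 1 < x) M + replicate_mset (count M 1) 1"
    by (metis filter_eq_replicate_mset multiset_partition)
  show size: "size (remove_column M) + count M 1 = size M"
    by (subst (3) parts) (simp add: remove_column_def)
  have "image_mset Suc (remove_column M) = filter_mset (\<lambda>x. 1 < x) M"
    unfolding remove_column_def multiset.map_comp comp_def
    by (rule image_mset_cong[of _ _ "\<lambda>x. x", simplified]) auto
  moreover have "size M - size (remove_column M) = count M 1"
    using size by simp
  ultimately show "add_column (size M) (remove_column M) = M"
    using parts by (simp add: add_column_def)
qed

definition extend_column :: "nat \<Rightarrow> overpartition \<Rightarrow> overpartition" where
  "extend_column b = (\<lambda>(M, S). (add_column b M, Suc ` S))"

definition extend_column_overlined :: "nat \<Rightarrow> overpartition \<Rightarrow> overpartition" where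
  "extend_column_overlined b = (\<lambda>(M, S). (add_column b M, insert 1 (Suc ` S)))"

lemma add_column_in_overpartitions_box:
  assumes "(M, S) \<in> overpartitions_box k b" "b \<le> b'" "S' \<subseteq> set_mset (add_column b' M)"
  shows "(add_column b' M, S') \<in> overpartitions_box (Suc k) b'"
proof -
  have "0 < x \<and> x \<le> Suc k" if "x \<in># add_column b' M" for x
    using that set_mset_add_column_subset[of b' M] assms(1) by (auto simp: overpartitions_box_iff)
  with assms show ?thesis by (simp add: overpartitions_box_iff size_add_column)
qed

lemma Suc_image_pred_image:
  assumes "0 \<notin> S"
  shows "Suc ` (\<lambda>x. x - 1) ` S = S"
proof -
  have "Suc (x - 1) = x" if "x \<in> S" for x
    using that assms by (cases x) auto
  then show ?thesis by (simp add: image_image cong: image_cong)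
qed

lemma remove_column_in_overpartitions_box:
  assumes "(M, S) \<in> overpartitions_box (Suc k) b"
  shows "(remove_column M, (\<lambda>x. x - 1) ` (S - {1})) \<in> overpartitions_box k (size (remove_column M))"
proof -
  have "\<forall>x\<in>#remove_column M. 0 < x \<and> x \<le> k"
    using assms by (auto simp: in_remove_column_iff overpartitions_box_iff)
  moreover have "(\<lambda>x. x - 1) ` (S - {1}) \<subseteq> set_mset (remove_column M)"
  proof (rule image_subsetI)
    fix s assume "s \<in> S - {1}"
    with assms have "s \<in># M" "0 < s" "s \<noteq> 1" by (auto simp: overpartitions_box_iff)
    then show "s - 1 \<in># remove_column M" by (simp add: in_remove_column_iff)
  qed
  ultimately show ?thesis by (simp add: overpartitions_box_iff)
qed

lemma overpartitions_box_split_first_column: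
  "overpartitions_box (Suc k) (Suc b) = overpartitions_box (Suc k) b
     \<union> extend_column (Suc b) ` overpartitions_box k (Suc b)
     \<union> extend_column_overlined (Suc b) ` overpartitions_box k b"
  (is "?B = ?P0 \<union> ?PA \<union> ?PB")
proof
  have "?P0 \<subseteq> ?B" by (rule overpartitions_box_mono) auto
  moreover have "extend_column (Suc b) p \<in> ?B" if "p \<in> overpartitions_box k (Suc b)" for p
  proof (cases p)
    case (Pair M S)
    with that have "S \<subseteq> set_mset M" by (simp add: overpartitions_box_iff)
    then have "Suc ` S \<subseteq> set_mset (add_column (Suc b) M)"
      using Suc_in_add_column by blast
    with that show ?thesis
      by (simp add: Pair extend_column_def add_column_in_overpartitions_box)
  qed
  moreover have "extend_column_overlined (Suc b) p \<in> ?B" if "p \<in> overpartitions_box k b" for p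
  proof (cases p)
    case (Pair M S)
    with that have "S \<subseteq> set_mset M" "size M < Suc b" by (simp_all add: overpartitions_box_iff)
    then have "insert 1 (Suc ` S) \<subseteq> set_mset (add_column (Suc b) M)"
      using Suc_in_add_column one_in_add_column by blast
    with that show ?thesis
      by (simp add: Pair extend_column_overlined_def add_column_in_overpartitions_box)
  qed
  ultimately show "?P0 \<union> ?PA \<union> ?PB \<subseteq> ?B" by blast
next
  show "?B \<subseteq> ?P0 \<union> ?PA \<union> ?PB"
  proof
    fix p assume "p \<in> ?B"
    then obtain M S where p: "p = (M, S)" and box: "(M, S) \<in> ?B" by (cases p) auto
    show "p \<in> ?P0 \<union> ?PA \<union> ?PB"
    proof (cases "size M \<le> b")
      case True
      then show ?thesis using box by (simp add: p overpartitions_box_iff)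
    next
      case False
      with box have size: "size M = Suc b" by (simp add: overpartitions_box_iff)
      have pos: "\<forall>x\<in>#M. 0 < x"
        using box by (simp add: overpartitions_box_iff)
      define N where "N = remove_column M"
      define S' where "S' = (\<lambda>x. x - 1) ` (S - {1})"
      have M: "M = add_column (Suc b) N"
        using add_remove_column[OF pos] by (simp add: N_def size)
      have N: "(N, S') \<in> overpartitions_box k (size N)"
        unfolding N_def S'_def using box by (rule remove_column_in_overpartitions_box)
      have "0 \<notin> S - {1}"
        using box by (auto simp: overpartitions_box_iff)
      then have S: "Suc ` S' = S - {1}"
        unfolding S'_def by (rule Suc_image_pred_image)
      have size_N: "size N + count M 1 = Suc b"
        using size_remove_column[OF pos] by (simp add: N_def size)
      show ?thesis
      proof (cases "1 \<in> S")
        case False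
        have "(N, S') \<in> overpartitions_box k (Suc b)"
          using N size_N overpartitions_box_mono[of k k "size N" "Suc b"] by auto
        moreover have "p = extend_column (Suc b) (N, S')"
          using S False by (simp add: p M extend_column_def)
        ultimately show ?thesis by blast
      next
        case True
        with box have "0 < count M 1" by (auto simp: overpartitions_box_iff)
        then have "size N \<le> b" using size_N by linarith
        then have "(N, S') \<in> overpartitions_box k b"
          using N overpartitions_box_mono[of k k "size N" b] by blast
        moreover have "p = extend_column_overlined (Suc b) (N, S')"
          using S True by (auto simp: p M extend_column_overlined_def)
        ultimately show ?thesis by blast
      qed
    qed
  qed
qed

lemma add_column_eq_iff:
  assumes "\<forall>x\<in>#M. 0 < x" "\<forall>x\<in>#M'. 0 < x"
  shows "add_column b M = add_column b M' \<longleftrightarrow> M = M'"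
  using assms by (metis remove_add_column)

lemma inj_on_extend_column: "inj_on (extend_column b) (overpartitions_box k b')"
  by (rule inj_onI)
    (auto simp: extend_column_def overpartitions_box_iff add_column_eq_iff inj_image_eq_iff)

lemma inj_on_extend_column_overlined:
  "inj_on (extend_column_overlined b) (overpartitions_box k b')"
proof (rule inj_onI, clarify)
  fix M S M' S'
  assume box: "(M, S) \<in> overpartitions_box k b'" "(M', S') \<in> overpartitions_box k b'"
    and "extend_column_overlined b (M, S) = extend_column_overlined b (M', S')"
  moreover have "1 \<notin> Suc ` S" "1 \<notin> Suc ` S'"
    using box by (auto simp: overpartitions_box_iff)
  ultimately show "M = M' \<and> S = S'"
    by (auto simp: extend_column_overlined_def overpartitions_box_iff add_column_eq_iff
        insert_ident inj_image_eq_iff)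
qed

lemma over_gauss_box_first_column:
  "over_gauss_box (Suc k) (Suc b) q t = over_gauss_box (Suc k) b q t
     + q ^ Suc b * over_gauss_box k (Suc b) q t + t * q ^ Suc b * over_gauss_box k b q t"
proof -
  let ?w = "overpartition_weight q t"
  let ?P0 = "overpartitions_box (Suc k) b"
  let ?A = "overpartitions_box k (Suc b)" and ?C = "overpartitions_box k b"
  have "sum ?w (extend_column (Suc b) ` ?A) = q ^ Suc b * sum ?w ?A"
  proof (rule sum_image_eq_mult)
    show "inj_on (extend_column (Suc b)) ?A" by (rule inj_on_extend_column)
    show "?w (extend_column (Suc b) p) = q ^ Suc b * ?w p" if "p \<in> ?A" for p
    proof (cases p)
      case (Pair M S)
      with that have "size M \<le> Suc b" by (simp add: overpartitions_box_iff)
      then show ?thesis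
        by (simp add: Pair extend_column_def overpartition_weight_def sum_mset_add_column
            card_image power_add mult_ac)
    qed
  qed
  moreover have "sum ?w (extend_column_overlined (Suc b) ` ?C) = t * q ^ Suc b * sum ?w ?C"
  proof (rule sum_image_eq_mult)
    show "inj_on (extend_column_overlined (Suc b)) ?C" by (rule inj_on_extend_column_overlined)
    show "?w (extend_column_overlined (Suc b) p) = t * q ^ Suc b * ?w p" if "p \<in> ?C" for p
    proof (cases p)
      case (Pair M S)
      with that have "size M \<le> Suc b" "finite S" "0 \<notin> S"
        by (auto simp: overpartitions_box_iff intro: finite_subset)
      moreover from this have "card (insert 1 (Suc ` S)) = Suc (card S)"
        by (subst card_insert_disjoint) (auto simp: card_image)
      ultimately show ?thesis
        by (simp add: Pair extend_column_overlined_def overpartition_weight_def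
            sum_mset_add_column card_image power_add mult_ac)
    qed
  qed
  moreover have "?P0 \<inter> extend_column (Suc b) ` ?A = {}"
    "?P0 \<inter> extend_column_overlined (Suc b) ` ?C = {}"
    by (auto simp: extend_column_def extend_column_overlined_def overpartitions_box_iff size_add_column)
  moreover have "extend_column (Suc b) ` ?A \<inter> extend_column_overlined (Suc b) ` ?C = {}"
  proof -
    have "1 \<notin> snd (extend_column (Suc b) p)" if "p \<in> ?A" for p
      using that by (cases p) (auto simp: extend_column_def overpartitions_box_iff)
    moreover have "1 \<in> snd (extend_column_overlined (Suc b) p)" for p
      by (cases p) (simp add: extend_column_overlined_def)
    ultimately show ?thesis unfolding disjoint_iff by (metis imageE)
  qed
  ultimately show ?thesis
    unfolding over_gauss_box_def overpartitions_box_split_first_column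
    by (simp add: sum_Un3 finite_overpartitions_box)
qed

theorem theorem2p3:
  fixes q t :: "'a::comm_ring_1" and m n :: nat
  assumes "0 < m" and "0 < n"
  shows "(over_gauss (m + n) n q t =
           over_gauss (m + n - 1) (n - 1) q t + q ^ n * over_gauss (m + n - 1) n q t
           + t * q ^ n * over_gauss (m + n - 2) (n - 1) q t)
       \<and> ( over_gauss (m + n) n q t =
           over_gauss (m + n - 1) n q t + q ^ m * over_gauss (m + n - 1) (n - 1) q t
           + t * q ^ m * over_gauss (m + n - 2) (n - 1) q t)"
proof -
  obtain k b where m: "m = Suc k" and n: "n = Suc b"
    using assms by (metis gr0_implies_Suc)
  show ?thesis
    unfolding m n over_gauss_eq_over_gauss_box
    using over_gauss_box_first_column[of k b q t] over_gauss_box_largest_part[of k b q t]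
    by simp
qed

end
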